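(* Let $p$ be a prime, $k\ge 1$ an integer, $q=p^k$, let $f(x)\in\mathbb F_q[x]$ and $a\in\mathbb F_q$. Then: (i) The polynomial $m_f(x)$ has integer coefficients. The sequence $\{u_s(f,a)\}_{s=1}^\infty$ is a linear recursion sequence and $m_f(x)$ is a generating polynomial of it. Moreover, $m_f(x)$ is the minimal polynomial of the sequence $\{u_s(f,0)\}_{s=1}^\infty$. (ii) As formal power series (equivalently, as rational functions) in $x$, $$\sum_{s=1}^{\infty}N_{s}(f,a)x^s=\frac{x}{1-qx}-\frac{x\,\tilde M_{f,a}(x)}{q\,M_f(x)},$$ where $$M_f(x):=\prod_{\substack{m\in\mathbb F_q^{*}\\ S_{f,m}\neq 0}}\Big(x-\frac{1}{S_{f,m}}\Big),\qquad \tilde M_{f,a}(x):=\sum_{\substack{n\in \mathbb F_q^{*}\\ S_{f,n}\neq0}}\zeta_p^{\mathrm{Tr}(-na)}\prod_{\substack{m\in \mathbb F_q^{*}\setminus\{n\}\\ S_{f,m}\neq 0}}\Big(x-\frac{1}{S_{f,m}}\Big)$$ (the products run over elements $m$, so repeated values of $S_{f,m}$ give repeated factors). In particular, for $a=0$, $\tilde M_{f,0}(x)=M_f'(x)$, the derivative of $M_f(x)$, so that $\sum_{s\ge1}N_s(f,0)x^s=\frac{x}{1-qx}-\frac{xM_f'(x)}{qM_f(x)}$.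
   Context: $\mathbb F_q$ is the finite field with $q=p^k$ elements, $\mathbb F_q^*=\mathbb F_q\setminus\{0\}$. $\mathrm{Tr}(b)=\sum_{i=0}^{k-1}b^{p^i}$ is the trace map $\mathbb F_q\to\mathbb F_p$, and $\zeta_p=\exp(2\pi i/p)$ (exponents in $\mathbb F_p$ are read as integers mod $p$). For $m\in\mathbb F_q$, $S_{f,m}:=\sum_{x\in\mathbb F_q}\zeta_p^{\mathrm{Tr}(mf(x))}$. Let $\Omega_f:=\{S_{f,m}: m\in\mathbb F_q^*,\ S_{f,m}\neq0\}$ (the set of distinct nonzero values) and $m_f(x):=\prod_{\lambda\in\Omega_f}(x-\lambda)$. For $s\ge1$, $N_s(f,a)$ is the number of $(x_1,\dots,x_s)\in\mathbb F_q^s$ with $f(x_1)+\cdots+f(x_s)=a$, and $u_s(f,a):=N_s(f,a)-q^{s-1}$. A sequence of integers $\{a_s\}_{s\ge1}$ is a linear recursion sequence if there is $g(x)=\sum_{i=0}^d k_ix^i\in\mathbb Z[x]$ with $k_d\neq0$ such that $k_0a_{j+1}+k_1a_{j+2}+\cdots+k_da_{j+d+1}=0$ for all integers $j\ge0$; such $g$ is called a generating polynomial of the sequence. The generating polynomials form a principal ideal of $\mathbb Z[x]$, generated by a polynomial $h$ of minimal degree whose coefficients have gcd $1$ (unique up to sign); $h$ is the minimal polynomial of the sequence, and its degree is the degree of the sequence. *)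

theory Defs
  imports "HOL-Computational_Algebra.Computational_Algebra" "HOL-Library.FuncSet"
begin

definition zeta :: "nat \<Rightarrow> complex" where
  "zeta p = exp (2 * of_real pi * \<i> / of_nat p)"

(* Trace F_q -> F_p, q = p^k, with values in the prime subfield of 'a *)
definition tr :: "nat \<Rightarrow> nat \<Rightarrow> 'a::field \<Rightarrow> 'a" where
  "tr p k b = (\<Sum>i<k. b ^ (p ^ i))"

definition tr_nat :: "nat \<Rightarrow> nat \<Rightarrow> 'a::field \<Rightarrow> nat" where
  "tr_nat p k b = (THE j. j < p \<and> of_nat j = tr p k b)"

definition psi :: "nat \<Rightarrow> nat \<Rightarrow> 'a::field \<Rightarrow> complex" where
  "psi p k b = zeta p ^ tr_nat p k b"

definition S :: "nat \<Rightarrow> nat \<Rightarrow> 'a::{field,finite} poly \<Rightarrow> 'a \<Rightarrow> complex" where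
  "S p k f m = (\<Sum>x\<in>(UNIV::'a set). psi p k (m * poly f x))"

definition Omega :: "nat \<Rightarrow> nat \<Rightarrow> 'a::{field,finite} poly \<Rightarrow> complex set" where
  "Omega p k f = {S p k f m | m. m \<noteq> 0 \<and> S p k f m \<noteq> 0}"

definition mpoly :: "nat \<Rightarrow> nat \<Rightarrow> 'a::{field,finite} poly \<Rightarrow> complex poly" where
  "mpoly p k f = (\<Prod>c\<in>Omega p k f. [:-c, 1:])"

definition N :: "nat \<Rightarrow> 'a::{field,finite} poly \<Rightarrow> 'a \<Rightarrow> nat" where
  "N s f a = card {x \<in> {0..<s} \<rightarrow>\<^sub>E (UNIV::'a set). (\<Sum>i<s. poly f (x i)) = a}"

definition u :: "nat \<Rightarrow> 'a::{field,finite} poly \<Rightarrow> 'a \<Rightarrow> int" where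
  "u s f a = int (N s f a) - int (card (UNIV::'a set)) ^ (s - 1)"

(* g = sum k_i x^i with k_d \<noteq> 0 is a generating polynomial of the integer sequence
   (a_s)_{s \<ge> 1} (given as a function on nat, values at s \<ge> 1 used) *)
definition gen_poly :: "int poly \<Rightarrow> (nat \<Rightarrow> int) \<Rightarrow> bool" where
  "gen_poly g a \<longleftrightarrow> g \<noteq> 0 \<and>
     (\<forall>j. (\<Sum>i\<le>degree g. coeff g i * a (j + i + 1)) = 0)"

definition lin_rec_seq :: "(nat \<Rightarrow> int) \<Rightarrow> bool" where
  "lin_rec_seq a \<longleftrightarrow> (\<exists>g. gen_poly g a)"

definition min_poly_seq :: "int poly \<Rightarrow> (nat \<Rightarrow> int) \<Rightarrow> bool" where
  "min_poly_seq h a \<longleftrightarrow> gen_poly h a \<and> content h = 1 \<and>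
     (\<forall>g. gen_poly g a \<longrightarrow> degree h \<le> degree g)"

definition Mf :: "nat \<Rightarrow> nat \<Rightarrow> 'a::{field,finite} poly \<Rightarrow> complex poly" where
  "Mf p k f = (\<Prod>m\<in>{m. m \<noteq> 0 \<and> S p k f m \<noteq> 0}. [:- 1 / S p k f m, 1:])"

definition Mt :: "nat \<Rightarrow> nat \<Rightarrow> 'a::{field,finite} poly \<Rightarrow> 'a \<Rightarrow> complex poly" where
  "Mt p k f a = (\<Sum>n\<in>{n. n \<noteq> 0 \<and> S p k f n \<noteq> 0}.
      smult (psi p k (- n * a))
        (\<Prod>m\<in>{m. m \<noteq> 0 \<and> m \<noteq> n \<and> S p k f m \<noteq> 0}. [:- 1 / S p k f m, 1:]))"

end

theory Submission
  imports Defs "HOL-Number_Theory.Cong"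
begin

text \<open>
  With the additive character \<open>psi b = zeta_p ^ Tr b\<close>, orthogonality turns the count into a
  power sum: \<open>q N_s(f,a) = \<Sum>m. psi(-m a) S_{f,m}^s\<close>, so \<open>q u_s(f,a)\<close> is the sum of
  \<open>psi(-m a) S_{f,m}^s\<close> over the \<open>m \<noteq> 0\<close> with \<open>S_{f,m} \<noteq> 0\<close>. Every polynomial
  vanishing on \<open>\<Omega>_f\<close> therefore annihilates \<open>u_s(f,a)\<close>; for \<open>a = 0\<close> all weights are 1,
  so conversely a generating polynomial must vanish on \<open>\<Omega>_f\<close>, which bounds its degree from
  below by \<open>deg m_f\<close>. Summing the geometric series in \<open>S_{f,m}\<close> gives the generating function
  as a partial fraction decomposition over the factors \<open>x - 1/S_{f,m}\<close>.

  Integrality is Galois theory of \<open>\<rat>(zeta_p)\<close> done by hand. Each \<open>S_{f,m}\<close> is the value at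
  \<open>zeta_p\<close> of an integer polynomial, and since the cyclotomic polynomial \<open>\<Phi>_p\<close> is
  irreducible (it is \<open>(X - 1)^(p-1)\<close> modulo \<open>p\<close>), integer relations at \<open>zeta_p\<close> persist at
  every \<open>zeta_p^t\<close> with \<open>p \<nmid> t\<close>. The substitution \<open>zeta_p \<mapsto> zeta_p^t\<close> sends \<open>S_{f,m}\<close>
  to \<open>S_{f,tm}\<close> and so permutes \<open>\<Omega>_f\<close>; hence every coefficient of \<open>m_f\<close> is the common
  value of one integer polynomial at all primitive \<open>p\<close>-th roots of unity, which forces it to be an
  integer.
\<close>

section \<open>Integer polynomials and their complex roots\<close>

lemma map_poly_of_int_add:
  "map_poly of_int (A + B) = (map_poly of_int A + map_poly of_int B :: 'b::comm_ring_1 poly)"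
  by (rule poly_eqI) (simp add: coeff_map_poly)

lemma map_poly_of_int_diff:
  "map_poly of_int (A - B) = (map_poly of_int A - map_poly of_int B :: 'b::comm_ring_1 poly)"
  by (rule poly_eqI) (simp add: coeff_map_poly)

lemma map_poly_of_int_mult:
  "map_poly of_int (A * B) = (map_poly of_int A * map_poly of_int B :: 'b::comm_ring_1 poly)"
  by (rule poly_eqI) (simp add: coeff_map_poly coeff_mult)

lemma map_poly_of_int_sum:
  "map_poly of_int (\<Sum>i\<in>I. A i) = (\<Sum>i\<in>I. map_poly of_int (A i) :: 'b::comm_ring_1 poly)"
  by (induction I rule: infinite_finite_induct) (simp_all add: map_poly_of_int_add)

lemma poly_map_poly_of_int:
  "poly (map_poly of_int A) (of_int x :: 'b::comm_ring_1) = of_int (poly A x)"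
  by (induction A) (simp_all add: map_poly_pCons)

lemma degree_map_poly_of_int [simp]:
  "degree (map_poly of_int A :: 'b::{comm_ring_1,ring_char_0} poly) = degree A"
  by (rule degree_map_poly) simp

lemma map_poly_of_int_eq_0_iff [simp]:
  "map_poly of_int A = (0 :: 'b::{comm_ring_1,ring_char_0} poly) \<longleftrightarrow> A = 0"
  by (simp add: map_poly_eq_0_iff)

lemma monic_int_poly_divmod:
  fixes P A :: "int poly"
  assumes "lead_coeff P = 1"
  obtains Q R where "A = P * Q + R" and "R = 0 \<or> degree R < degree P"
proof -
  have "P \<noteq> 0"
    using assms by auto
  obtain Q R where "pseudo_divmod A P = (Q, R)"
    by (cases "pseudo_divmod A P")
  from pseudo_divmod[OF \<open>P \<noteq> 0\<close> this] assms show ?thesis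
    by (intro that[of Q R]) simp_all
qed

lemma content_monic_int_poly:
  fixes P :: "int poly"
  assumes "lead_coeff P = 1"
  shows "content P = 1"
proof -
  have "content P dvd 1"
    using content_dvd_coeff[of P "degree P"] assms by simp
  then show ?thesis
    by (metis normalize_content is_unit_normalize)
qed

lemma monic_irreducible_int_poly_smult_factor:
  fixes P B Q :: "int poly"
  assumes P_monic: "lead_coeff P = 1"
    and P_irred: "\<And>B C. P = B * C \<Longrightarrow> degree B = 0 \<or> degree C = 0"
    and "L \<noteq> 0" and fac: "smult L P = B * Q"
  shows "degree B = 0 \<or> degree Q = 0"
proof -
  have "smult (sgn L) P = primitive_part B * primitive_part Q"
    using arg_cong[OF fac, of primitive_part] content_monic_int_poly[OF P_monic]
    by (simp add: primitive_part_smult primitive_part_mult primitive_part_prim)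
  moreover have "sgn L * sgn L = 1"
    using \<open>L \<noteq> 0\<close> by (cases "L > 0") auto
  ultimately have "P = primitive_part B * smult (sgn L) (primitive_part Q)"
    by (metis mult_smult_right smult_1_left smult_smult)
  then have "degree (primitive_part B) = 0 \<or> degree (smult (sgn L) (primitive_part Q)) = 0"
    by (rule P_irred)
  then show ?thesis
    using \<open>L \<noteq> 0\<close> by (simp add: sgn_0_0)
qed

lemma degree_ne_0_if_int_poly_root:
  fixes B :: "int poly" and w :: "'b::{comm_ring_1,ring_char_0}"
  assumes "B \<noteq> 0" and "poly (map_poly of_int B) w = 0"
  shows "degree B \<noteq> 0"
proof
  assume "degree B = 0"
  then obtain c where "B = [:c:]" and "c \<noteq> 0"
    using assms(1) by (metis degree_eq_zeroE pCons_0_0)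
  then show False
    using assms(2) by (simp add: map_poly_pCons)
qed

lemma int_poly_root_min_degree:
  fixes P B :: "int poly" and w :: "'b::{field,ring_char_0}"
  assumes P_monic: "lead_coeff P = 1"
    and P_irred: "\<And>B C. P = B * C \<Longrightarrow> degree B = 0 \<or> degree C = 0"
    and P_root: "poly (map_poly of_int P) w = 0"
    and B: "B \<noteq> 0" "poly (map_poly of_int B) w = 0"
    and B_min: "\<And>R. R \<noteq> 0 \<Longrightarrow> poly (map_poly of_int R) w = 0 \<Longrightarrow> degree B \<le> degree R"
  shows "degree P \<le> degree B"
proof -
  obtain Q R where qr: "pseudo_divmod P B = (Q, R)"
    by (cases "pseudo_divmod P B")
  define L where "L = lead_coeff B ^ (Suc (degree P) - degree B)"
  have div: "smult L P = B * Q + R" and R: "R = 0 \<or> degree R < degree B"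
    using pseudo_divmod[OF B(1) qr] by (simp_all add: L_def)
  have "R = smult L P - B * Q"
    using div by simp
  then have "poly (map_poly of_int R) w = 0"
    by (simp add: map_poly_of_int_diff map_poly_of_int_mult map_poly_smult P_root B(2))
  have "R = 0"
  proof (rule ccontr)
    assume "R \<noteq> 0"
    with B_min \<open>poly (map_poly of_int R) w = 0\<close> have "degree B \<le> degree R"
      by blast
    with R \<open>R \<noteq> 0\<close> show False
      by simp
  qed
  with div have fac: "smult L P = B * Q"
    by simp
  have "L \<noteq> 0"
    using B(1) by (simp add: L_def)
  have "degree B \<noteq> 0"
    by (rule degree_ne_0_if_int_poly_root[OF B])
  then have "degree Q = 0"
    using monic_irreducible_int_poly_smult_factor[OF P_monic P_irred \<open>L \<noteq> 0\<close> fac] by simp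
  moreover have "Q \<noteq> 0"
    using fac \<open>L \<noteq> 0\<close> P_monic by auto
  ultimately show ?thesis
    using arg_cong[OF fac, of degree] \<open>L \<noteq> 0\<close> B(1) by (simp add: degree_mult_eq)
qed

lemma monic_irreducible_int_poly_dvd:
  fixes P A :: "int poly" and w :: "'b::{field,ring_char_0}"
  assumes P_monic: "lead_coeff P = 1"
    and P_irred: "\<And>B C. P = B * C \<Longrightarrow> degree B = 0 \<or> degree C = 0"
    and P_root: "poly (map_poly of_int P) w = 0"
    and A_root: "poly (map_poly of_int A) w = 0"
  shows "P dvd A"
proof -
  obtain B where B: "B \<noteq> 0" "poly (map_poly of_int B) w = 0"
    and B_min: "\<And>R. R \<noteq> 0 \<Longrightarrow> poly (map_poly of_int R) w = 0 \<Longrightarrow> degree B \<le> degree R"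
    using ex_has_least_nat[of "\<lambda>B. B \<noteq> 0 \<and> poly (map_poly of_int B) w = (0::'b)" P degree]
      P_monic P_root by (metis leading_coeff_0_iff zero_neq_one)
  have "degree P \<le> degree B"
    using int_poly_root_min_degree[OF P_monic P_irred P_root B B_min] .
  obtain Q R where div: "A = P * Q + R" and R: "R = 0 \<or> degree R < degree P"
    using monic_int_poly_divmod[OF P_monic] .
  have "R = A - P * Q"
    using div by simp
  then have "poly (map_poly of_int R) w = 0"
    by (simp add: map_poly_of_int_diff map_poly_of_int_mult P_root A_root)
  then have "R = 0"
    using R B_min \<open>degree P \<le> degree B\<close> by (meson leD order.strict_trans2)
  with div show ?thesis
    by simp
qed

lemma poly_eq_const_if_card_gt_degree:
  fixes D :: "'b::idom poly"
  assumes "finite X" and "degree D < card X" and "\<And>x. x \<in> X \<Longrightarrow> poly D x = c"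
  shows "D = [:c:]"
proof (rule ccontr)
  assume "D \<noteq> [:c:]"
  then have E: "D - [:c:] \<noteq> 0"
    by simp
  have "card X \<le> card {x. poly (D - [:c:]) x = 0}"
    using assms(3) by (intro card_mono poly_roots_finite[OF E]) auto
  also have "\<dots> \<le> degree (D - [:c:])"
    by (rule card_poly_roots_bound[OF E])
  also have "\<dots> \<le> degree D"
    using degree_diff_le_max[of D "[:c:]"] by simp
  finally show False
    using assms(2) by simp
qed

lemma coeff_prod_linear_eval:
  fixes P :: "'i \<Rightarrow> int poly" and w :: "'b::comm_ring_1"
  assumes "finite I"
  shows "coeff (\<Prod>i\<in>I. [:- poly (map_poly of_int (P i)) w, 1:]) j
       = poly (map_poly of_int (coeff (\<Prod>i\<in>I. [:- P i, 1:]) j)) w"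
  using assms
proof (induction I arbitrary: j rule: finite_induct)
  case empty
  then show ?case
    by (simp add: coeff_1)
next
  case (insert i I)
  have linear: "[:- c, 1:] * F = smult (- c) F + pCons 0 F" for c :: "'r::comm_ring_1" and F
    by (simp add: mult_pCons_left)
  show ?case
    using insert by (cases j) (simp_all add: linear coeff_pCons map_poly_of_int_add
        map_poly_of_int_mult map_poly_of_int_diff map_poly_of_int_diff[of 0, simplified])
qed

text \<open>For prime \<open>n\<close>, \<open>geom_poly n\<close> is the \<open>n\<close>-th cyclotomic polynomial.\<close>

definition geom_poly :: "nat \<Rightarrow> int poly" where
  "geom_poly n = (\<Sum>j<n. monom 1 j)"

lemma coeff_geom_poly: "coeff (geom_poly n) i = (if i < n then 1 else 0)"
  by (simp add: geom_poly_def coeff_sum coeff_monom)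

lemma poly_geom_poly: "poly (map_poly of_int (geom_poly n)) (w :: 'b::comm_ring_1) = (\<Sum>j<n. w ^ j)"
  by (simp add: geom_poly_def map_poly_of_int_sum map_poly_monom poly_sum poly_monom)

lemma degree_geom_poly: "n > 0 \<Longrightarrow> degree (geom_poly n) = n - 1"
  by (intro antisym degree_le le_degree) (auto simp: coeff_geom_poly)

lemma lead_coeff_geom_poly: "n > 0 \<Longrightarrow> lead_coeff (geom_poly n) = 1"
  by (simp add: degree_geom_poly coeff_geom_poly)

lemma linear_times_geom_poly:
  "[:- 1, 1:] * map_poly of_int (geom_poly n) = (monom 1 n - 1 :: 'b::comm_ring_1 poly)"
proof -
  have linear: "[:- 1, 1:] = (monom 1 1 - 1 :: 'b poly)"
    by (rule poly_eqI) (simp add: coeff_monom coeff_pCons split: nat.split)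
  have "[:- 1, 1:] * map_poly of_int (geom_poly n) = (\<Sum>j<n. [:- 1, 1:] * monom (1::'b) j)"
    by (simp add: geom_poly_def map_poly_of_int_sum map_poly_monom sum_distrib_left)
  also have "\<dots> = (\<Sum>j<n. monom 1 (Suc j) - monom 1 j)"
    by (simp add: linear algebra_simps mult_monom)
  also have "\<dots> = monom 1 n - 1"
    by (simp add: sum_lessThan_telescope)
  finally show ?thesis .
qed

lemma zeta_power_eq_cis: "zeta p ^ n = cis (2 * pi * real n / real p)"
  by (simp add: zeta_def cis_conv_exp DeMoivre mult_ac flip: exp_of_nat_mult)

lemma zeta_power_eq_iff:
  assumes "p > 0"
  shows "zeta p ^ a = zeta p ^ b \<longleftrightarrow> [a = b] (mod p)"
proof -
  have reduce: "zeta p ^ n = zeta p ^ (n mod p)" for n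
  proof -
    have "zeta p ^ p = 1"
      using assms by (simp add: zeta_power_eq_cis)
    then show ?thesis
      by (metis div_mult_mod_eq power_add power_mult power_one mult_1 mult.commute)
  qed
  have "inj_on (\<lambda>n. cis (2 * pi * real n / real p)) {..<p}"
    using bij_betw_roots_unity[OF assms] by (simp add: bij_betw_def)
  then have "zeta p ^ (a mod p) = zeta p ^ (b mod p) \<longleftrightarrow> a mod p = b mod p"
    using assms by (auto simp: zeta_power_eq_cis inj_on_def)
  then show ?thesis
    by (simp add: reduce[of a] reduce[of b] cong_def)
qed

section \<open>Power sums and partial fractions\<close>

lemma power_sums_vanish_imp_fiber_sum_eq_0:
  fixes x c :: "'i \<Rightarrow> 'b::field"
  assumes "finite M" and power_sums: "\<And>j. (\<Sum>m\<in>M. c m * x m ^ Suc j) = 0" and "v \<noteq> 0"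
  shows "(\<Sum>m | m \<in> M \<and> x m = v. c m) = 0"
proof -
  \<comment> \<open>combining the power sums with the coefficients of \<open>Q\<close> isolates the fibre over \<open>v\<close>\<close>
  define Q where "Q = (\<Prod>\<mu>\<in>x ` M - {v}. [:- \<mu>, 1:])"
  have Q_root: "poly Q (x m) = 0" if "m \<in> M" "x m \<noteq> v" for m
    using that assms(1) by (auto simp: Q_def poly_prod)
  have "0 = (\<Sum>i\<le>degree Q. coeff Q i * (\<Sum>m\<in>M. c m * x m ^ Suc i))"
    by (simp add: power_sums del: power_Suc)
  also have "\<dots> = (\<Sum>m\<in>M. c m * x m * poly Q (x m))"
    by (simp add: poly_altdef sum_distrib_left sum_distrib_right mult_ac sum.swap[of _ M])
  also have "\<dots> = (\<Sum>m | m \<in> M \<and> x m = v. c m * v * poly Q v)"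
    using assms(1) Q_root by (intro sum.mono_neutral_cong_right) auto
  also have "\<dots> = (\<Sum>m | m \<in> M \<and> x m = v. c m) * (v * poly Q v)"
    by (simp add: sum_distrib_right mult.assoc)
  finally show ?thesis
    using assms(1,3) by (simp add: Q_def poly_prod)
qed

lemma fps_inverse_one_minus_const_X:
  "inverse (1 - fps_const (c :: 'b::field) * fps_X) = Abs_fps (\<lambda>n. c ^ n)"
proof (rule fps_inverse_unique)
  show "(1 - fps_const c * fps_X) * Abs_fps (\<lambda>n. c ^ n) = 1"
    by (rule fps_ext) (simp add: algebra_simps mult.assoc power_eq_if)
qed

lemma fps_X_div_one_minus_const_X:
  "fps_X / (1 - fps_const (c :: 'b::field) * fps_X)
     = Abs_fps (\<lambda>n. if n = 0 then 0 else c ^ (n - 1))"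
  by (subst fps_divide_unit) (auto intro!: fps_ext simp: fps_inverse_one_minus_const_X power_eq_if)

lemma fps_X_times_inverse_linear:
  fixes x :: "'b::field"
  assumes "x \<noteq> 0"
  shows "fps_X * inverse (fps_of_poly [:- 1 / x, 1:]) = Abs_fps (\<lambda>j. if j = 0 then 0 else - (x ^ j))"
proof -
  have linear: "fps_of_poly [:- 1 / x, 1:] = fps_const (- 1 / x) * (1 - fps_const x * fps_X)"
    using assms by (intro fps_ext) (simp add: fps_of_poly_linear algebra_simps)
  have "inverse (fps_of_poly [:- 1 / x, 1:]) = fps_const (- x) * Abs_fps (\<lambda>n. x ^ n)"
    unfolding linear using assms
    by (simp add: fps_inverse_mult fps_const_inverse fps_inverse_one_minus_const_X)
  then show ?thesis
    by (intro fps_ext) (simp add: power_eq_if)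
qed

lemma fps_prod_remove_eq_inverse_mult:
  fixes L :: "'i \<Rightarrow> 'b::field fps"
  assumes "finite I" and "n \<in> I" and "L n $ 0 \<noteq> 0"
  shows "(\<Prod>m\<in>I - {n}. L m) = inverse (L n) * (\<Prod>m\<in>I. L m)"
proof -
  have "inverse (L n) * (\<Prod>m\<in>I. L m) = (inverse (L n) * L n) * (\<Prod>m\<in>I - {n}. L m)"
    using assms(1,2) by (simp add: prod.remove mult.assoc)
  then show ?thesis
    using inverse_mult_eq_1[OF assms(3)] by simp
qed

lemma fps_X_partial_fractions:
  fixes x c :: "'i \<Rightarrow> 'b::field"
  assumes "finite I" and x_nz: "\<And>n. n \<in> I \<Longrightarrow> x n \<noteq> 0"
  shows "fps_X * fps_of_poly (\<Sum>n\<in>I. smult (c n) (\<Prod>m\<in>I - {n}. [:- 1 / x m, 1:]))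
           / fps_of_poly (\<Prod>m\<in>I. [:- 1 / x m, 1:])
         = Abs_fps (\<lambda>j. if j = 0 then 0 else - (\<Sum>n\<in>I. c n * x n ^ j))"
proof -
  define L where "L m = fps_of_poly [:- 1 / x m, 1:]" for m
  define D where "D = (\<Prod>m\<in>I. L m)"
  have L0: "L m $ 0 \<noteq> 0" if "m \<in> I" for m
    using x_nz[OF that] by (simp add: L_def)
  have X_div_L: "fps_X * inverse (L m) = Abs_fps (\<lambda>j. if j = 0 then 0 else - (x m ^ j))"
    if "m \<in> I" for m
    using fps_X_times_inverse_linear[OF x_nz[OF that]] by (simp add: L_def)
  have D0: "D $ 0 \<noteq> 0"
  proof -
    have "D $ 0 = poly (\<Prod>m\<in>I. [:- 1 / x m, 1:]) 0"
      by (simp add: D_def L_def poly_0_coeff_0 flip: fps_of_poly_prod)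
    then show ?thesis
      using assms by (simp add: poly_prod)
  qed
  have cofactor: "(\<Prod>m\<in>I - {n}. L m) = inverse (L n) * D" if "n \<in> I" for n
    unfolding D_def using assms(1) that L0[OF that] by (rule fps_prod_remove_eq_inverse_mult)
  have "fps_of_poly (\<Sum>n\<in>I. smult (c n) (\<Prod>m\<in>I - {n}. [:- 1 / x m, 1:]))
      = (\<Sum>n\<in>I. fps_const (c n) * (\<Prod>m\<in>I - {n}. L m))"
    by (simp add: fps_of_poly_sum fps_of_poly_smult fps_of_poly_prod L_def)
  also have "\<dots> = D * (\<Sum>n\<in>I. fps_const (c n) * inverse (L n))"
    by (simp add: cofactor sum_distrib_left mult_ac cong: sum.cong)
  finally have "fps_X * fps_of_poly (\<Sum>n\<in>I. smult (c n) (\<Prod>m\<in>I - {n}. [:- 1 / x m, 1:])) / D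
      = fps_X * (D * (\<Sum>n\<in>I. fps_const (c n) * inverse (L n))) * inverse D"
    using D0 by (simp add: fps_divide_unit)
  also have "\<dots> = (D * inverse D) * (\<Sum>n\<in>I. fps_const (c n) * (fps_X * inverse (L n)))"
    by (simp add: sum_distrib_left mult_ac)
  also have "D * inverse D = 1"
    by (rule inverse_mult_eq_1'[OF D0])
  also have "1 * (\<Sum>n\<in>I. fps_const (c n) * (fps_X * inverse (L n)))
      = Abs_fps (\<lambda>j. if j = 0 then 0 else - (\<Sum>n\<in>I. c n * x n ^ j))"
    by (intro fps_ext) (simp add: X_div_L fps_sum_nth sum_negf)
  finally show ?thesis
    by (simp add: D_def L_def fps_of_poly_prod)
qed

section \<open>The trace and the additive character of a finite field\<close>

lemma finite_field_power_card_self: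
  fixes x :: "'a::{field,finite}"
  shows "x ^ card (UNIV :: 'a set) = x"
proof (cases "x = 0")
  case False
  define U where "U = UNIV - {0 :: 'a}"
  have "bij_betw ((*) x) U U"
    using False by (intro bij_betwI[where g = "\<lambda>y. y / x"]) (auto simp: U_def)
  then have "(\<Prod>y\<in>U. x * y) = \<Prod>U"
    by (rule prod.reindex_bij_betw)
  moreover have "\<Prod>U \<noteq> 0"
    by (simp add: U_def)
  ultimately have "x ^ card U = 1"
    by (simp add: prod.distrib)
  moreover have "card (UNIV :: 'a set) = Suc (card U)"
    using finite_UNIV_card_ge_0[where 'a = 'a] by (simp add: U_def card_Diff_singleton)
  ultimately show ?thesis
    by (simp only: power_Suc mult_1_right)
qed (simp add: finite_UNIV_card_ge_0)

locale prime_power_field =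
  fixes p k :: nat and field_type :: "'a::{field,finite} itself"
  assumes prime_p: "prime p" and k_pos: "k \<ge> 1"
    and card_UNIV: "card (UNIV :: 'a set) = p ^ k" and CHAR_eq: "CHAR('a) = p"
begin

lemma p_gt_1: "p > 1"
  using prime_p prime_gt_1_nat by blast

lemma p_pos [simp]: "p > 0"
  using p_gt_1 by simp

lemma frobenius_add: "((x::'a) + y) ^ (p ^ i) = x ^ (p ^ i) + y ^ (p ^ i)"
  by (rule freshmans_dream') (auto simp: prime_p CHAR_eq)

lemma frobenius_sum: "(\<Sum>j\<in>A. (g j :: 'a)) ^ (p ^ i) = (\<Sum>j\<in>A. g j ^ (p ^ i))"
  by (induction A rule: infinite_finite_induct) (auto simp: frobenius_add)

lemma of_nat_eq_iff_cong: "(of_nat a :: 'a) = of_nat b \<longleftrightarrow> [a = b] (mod p)"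
  using of_nat_eq_iff_cong_CHAR[where 'a = 'a] by (simp add: CHAR_eq)

lemma of_nat_power_p: "(of_nat j :: 'a) ^ p = of_nat j"
proof (induction j)
  case (Suc j)
  have "(of_nat (Suc j) :: 'a) ^ p = (of_nat j + 1) ^ (p ^ 1)"
    by (simp add: add.commute)
  also have "\<dots> = of_nat j ^ p + 1"
    by (subst frobenius_add) simp
  also have "\<dots> = of_nat (Suc j)"
    using Suc.IH by simp
  finally show ?case .
qed simp

lemma power_p_fixed_imp_of_nat:
  assumes "(y :: 'a) ^ p = y"
  obtains j where "j < p" and "of_nat j = y"
proof -
  define P :: "'a poly" where "P = monom 1 p - monom 1 1"
  have poly_P: "poly P x = x ^ p - x" for x
    by (simp add: P_def poly_monom)
  have "coeff P p = 1"
    using p_gt_1 by (simp add: P_def)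
  then have "P \<noteq> 0"
    by auto
  have "degree P \<le> p"
    unfolding P_def using degree_monom_le[of "1::'a" p] degree_monom_le[of "1::'a" 1] p_gt_1
    by (intro degree_diff_le) simp_all
  have roots: "of_nat ` {..<p} \<subseteq> {x :: 'a. poly P x = 0}"
    using of_nat_power_p by (auto simp: poly_P)
  have "card (of_nat ` {..<p} :: 'a set) = p"
    by (subst card_image) (auto simp: inj_on_def of_nat_eq_iff_cong cong_def)
  moreover have "card {x :: 'a. poly P x = 0} \<le> p"
    using card_poly_roots_bound[OF \<open>P \<noteq> 0\<close>] \<open>degree P \<le> p\<close> by linarith
  ultimately have "card (of_nat ` {..<p} :: 'a set) = card {x :: 'a. poly P x = 0}"
    using card_mono[OF poly_roots_finite[OF \<open>P \<noteq> 0\<close>] roots] by linarith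
  then have "of_nat ` {..<p} = {x :: 'a. poly P x = 0}"
    by (rule card_subset_eq[OF poly_roots_finite[OF \<open>P \<noteq> 0\<close>] roots])
  moreover have "poly P y = 0"
    using assms by (simp add: poly_P)
  ultimately have "y \<in> of_nat ` {..<p}"
    by simp
  then show ?thesis
    using that by (auto simp: image_iff)
qed

lemma tr_add: "tr p k ((x::'a) + y) = tr p k x + tr p k y"
  unfolding tr_def by (simp add: frobenius_add sum.distrib)

lemma tr_of_nat_mult: "tr p k (of_nat t * (b::'a)) = of_nat t * tr p k b"
proof -
  have "(of_nat t :: 'a) ^ (p ^ i) = of_nat t" for i
    by (induction i) (simp_all add: power_mult of_nat_power_p)
  then show ?thesis
    by (simp add: tr_def power_mult_distrib sum_distrib_left)
qed

lemma tr_power_p: "tr p k (x::'a) ^ p = tr p k x"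
proof -
  have "tr p k x ^ p = (\<Sum>i<k. x ^ (p ^ Suc i))"
    using frobenius_sum[of "\<lambda>i. x ^ (p ^ i)" "{..<k}" 1]
    by (simp add: tr_def power_mult[symmetric] mult.commute)
  also have "\<dots> = (\<Sum>i<Suc k. x ^ (p ^ i)) - x"
    by (simp only: sum.lessThan_Suc_shift) simp
  also have "\<dots> = tr p k x + x ^ (p ^ k) - x"
    by (simp add: tr_def)
  also have "x ^ (p ^ k) = x"
    using finite_field_power_card_self[of x] by (simp add: card_UNIV)
  finally show ?thesis
    by simp
qed

lemma tr_nat: "tr_nat p k (b::'a) < p" "of_nat (tr_nat p k b) = tr p k b"
proof -
  obtain j where j: "j < p" "(of_nat j :: 'a) = tr p k b"
    using power_p_fixed_imp_of_nat[OF tr_power_p] .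
  have "tr_nat p k b = j"
    unfolding tr_nat_def
  proof (rule the_equality)
    fix i
    assume "i < p \<and> (of_nat i :: 'a) = tr p k b"
    with j have "[i = j] (mod p)"
      by (simp flip: of_nat_eq_iff_cong)
    with j \<open>i < p \<and> _\<close> show "i = j"
      by (simp add: cong_def)
  qed (use j in simp)
  with j show "tr_nat p k b < p" "of_nat (tr_nat p k b) = tr p k b"
    by simp_all
qed

lemma psi_eq_zeta_power:
  assumes "of_nat j = tr p k (b::'a)"
  shows "psi p k b = zeta p ^ j"
proof -
  have "[tr_nat p k b = j] (mod p)"
    using assms tr_nat(2)[of b] by (simp add: of_nat_eq_iff_cong[symmetric])
  then show ?thesis
    using p_gt_1 by (simp add: psi_def zeta_power_eq_iff)
qed

lemma psi_add: "psi p k ((b::'a) + c) = psi p k b * psi p k c"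
proof -
  have "psi p k (b + c) = zeta p ^ (tr_nat p k b + tr_nat p k c)"
    by (rule psi_eq_zeta_power) (simp add: tr_add tr_nat(2))
  then show ?thesis
    by (simp add: psi_def power_add)
qed

lemma psi_zero [simp]: "psi p k (0::'a) = 1"
proof -
  have "psi p k (0::'a) = zeta p ^ 0"
    using p_gt_1 by (intro psi_eq_zeta_power) (simp add: tr_def zero_power)
  then show ?thesis
    by simp
qed

lemma psi_sum: "psi p k (\<Sum>i\<in>A. (g i :: 'a)) = (\<Prod>i\<in>A. psi p k (g i))"
  by (induction A rule: infinite_finite_induct) (auto simp: psi_add)

lemma psi_of_nat_mult: "psi p k (of_nat t * (b::'a)) = zeta p ^ (t * tr_nat p k b)"
  by (rule psi_eq_zeta_power) (simp add: tr_of_nat_mult tr_nat(2))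

lemma psi_ne_1:
  assumes "tr p k (b::'a) \<noteq> 0"
  shows "psi p k b \<noteq> 1"
proof
  assume "psi p k b = 1"
  then have "[tr_nat p k b = 0] (mod p)"
    using p_gt_1 zeta_power_eq_iff[of p "tr_nat p k b" 0] by (simp add: psi_def)
  then have "tr p k b = 0"
    by (simp flip: tr_nat(2) of_nat_eq_iff_cong)
  with assms show False ..
qed

lemma tr_not_identically_zero: "\<exists>b :: 'a. tr p k b \<noteq> 0"
proof (rule ccontr)
  assume "\<nexists>b :: 'a. tr p k b \<noteq> 0"
  then have tr_0: "tr p k (b :: 'a) = 0" for b
    by blast
  \<comment> \<open>the trace is a polynomial function of degree \<open>p^(k-1) < q\<close>\<close>
  define T :: "'a poly" where "T = (\<Sum>i<k. monom 1 (p ^ i))"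
  have "coeff T (p ^ (k - 1)) = (\<Sum>i<k. if i = k - 1 then 1 else 0)"
    using p_gt_1 by (simp add: T_def coeff_sum coeff_monom power_inject_exp)
  also have "\<dots> = 1"
    using k_pos by simp
  finally have "T \<noteq> 0"
    by auto
  have "degree T \<le> p ^ (k - 1)"
    unfolding T_def
  proof (rule degree_sum_le)
    fix i assume "i \<in> {..<k}"
    then have "p ^ i \<le> p ^ (k - 1)"
      using p_gt_1 by (intro power_increasing) auto
    then show "degree (monom (1::'a) (p ^ i)) \<le> p ^ (k - 1)"
      by (simp add: degree_monom_eq)
  qed simp
  have "card (UNIV :: 'a set) \<le> card {x. poly T x = 0}"
    by (simp add: T_def poly_sum poly_monom tr_0[unfolded tr_def])
  also have "\<dots> \<le> degree T"
    by (rule card_poly_roots_bound[OF \<open>T \<noteq> 0\<close>])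
  also have "\<dots> < p ^ k"
    using \<open>degree T \<le> p ^ (k - 1)\<close> power_strict_increasing[of "k - 1" k p] p_gt_1 k_pos
    by linarith
  finally show False
    by (simp add: card_UNIV)
qed

lemma psi_orthogonality:
  "(\<Sum>m\<in>UNIV. psi p k (m * (c::'a))) = (if c = 0 then of_nat (card (UNIV :: 'a set)) else 0)"
proof (cases "c = 0")
  case False
  obtain b :: 'a where b: "tr p k b \<noteq> 0"
    using tr_not_identically_zero by blast
  have "(\<Sum>m\<in>UNIV. psi p k (m * c)) = (\<Sum>m\<in>UNIV. psi p k ((m + b / c) * c))"
    by (rule sum.reindex_bij_witness[of _ "\<lambda>m. m + b / c" "\<lambda>m. m - b / c"]) auto
  also have "\<dots> = psi p k b * (\<Sum>m\<in>UNIV. psi p k (m * c))"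
  proof -
    have "(m + b / c) * c = b + m * c" for m
      using False by (simp add: field_simps)
    then show ?thesis
      by (simp add: psi_add sum_distrib_left)
  qed
  finally have "(1 - psi p k b) * (\<Sum>m\<in>UNIV. psi p k (m * c)) = 0"
    by (simp add: algebra_simps)
  with psi_ne_1[OF b] False show ?thesis
    by simp
qed simp

section \<open>Irreducibility of the cyclotomic polynomial of prime order\<close>

lemma map_geom_poly_char_p: "(map_poly of_int (geom_poly p) :: 'a poly) = [:- 1, 1:] ^ (p - 1)"
proof -
  have linear: "[:- 1, 1:] = (monom 1 1 + (- 1) :: 'a poly)"
    by (rule poly_eqI) (simp add: coeff_monom coeff_pCons split: nat.split)
  have "([:- 1, 1:] :: 'a poly) ^ p = monom 1 1 ^ p + (- 1) ^ p"
    unfolding linear by (rule freshmans_dream) (simp_all add: CHAR_eq prime_p)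
  also have "(- 1 :: 'a poly) ^ p = - 1"
    using minus_power_prime_CHAR[of p "1 :: 'a poly"] prime_p by (simp add: CHAR_eq)
  also have "monom 1 1 ^ p + - 1 = [:- 1, 1 :: 'a:] * map_poly of_int (geom_poly p)"
    unfolding linear_times_geom_poly by (simp add: monom_power)
  finally have "[:- 1, 1:] * [:- 1, 1:] ^ (p - 1) = [:- 1, 1 :: 'a:] * map_poly of_int (geom_poly p)"
    using p_pos by (simp flip: power_Suc)
  then show ?thesis
    using mult_left_cancel[of "[:- 1, 1 :: 'a:]"] by simp
qed

text \<open>
  Modulo \<open>p\<close> every factor of positive degree of \<open>\<Phi>_p = (X - 1)^(p-1)\<close> vanishes at 1; since
  \<open>\<Phi>_p(1) = p\<close>, this rules out nontrivial factorisations over the integers.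
\<close>

lemma geom_poly_factor_at_1:
  assumes fac: "geom_poly p = B * C" and deg: "degree B \<ge> 1"
  shows "int p dvd poly B 1"
proof -
  let ?B = "map_poly of_int B :: 'a poly" and ?C = "map_poly of_int C :: 'a poly"
  have prod: "?B * ?C = [:- 1, 1:] ^ (p - 1)"
    using map_geom_poly_char_p by (simp add: fac map_poly_of_int_mult)
  then have "?B * ?C \<noteq> 0"
    by simp
  then have "?C \<noteq> 0"
    by auto
  have "order 1 ?B + order 1 ?C = p - 1"
    using order_mult[OF \<open>?B * ?C \<noteq> 0\<close>, of 1] prod by (simp add: order_power_n_n)
  moreover have "order 1 ?C \<le> degree C"
    using order_degree[OF \<open>?C \<noteq> 0\<close>, of 1] map_poly_degree_leq[of "of_int :: int \<Rightarrow> 'a" C]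
    by linarith
  moreover have "degree B + degree C = p - 1"
    using fac degree_geom_poly[OF p_pos] lead_coeff_geom_poly[OF p_pos]
    by (metis degree_mult_eq mult_eq_0_iff leading_coeff_0_iff zero_neq_one)
  ultimately have "order 1 ?B \<noteq> 0"
    using deg by linarith
  then have "poly ?B 1 = 0"
    by (simp add: order_root)
  then have "(of_int (poly B 1) :: 'a) = 0"
    using poly_map_poly_of_int[of B 1, where 'b = 'a] by simp
  then show ?thesis
    by (simp add: of_int_eq_0_iff_char_dvd CHAR_eq)
qed

lemma geom_poly_irreducible:
  assumes fac: "geom_poly p = B * C"
  shows "degree B = 0 \<or> degree C = 0"
proof (rule ccontr)
  assume "\<not> (degree B = 0 \<or> degree C = 0)"
  then have "int p dvd poly B 1" and "int p dvd poly C 1"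
    using geom_poly_factor_at_1[OF fac] geom_poly_factor_at_1[of C B] fac
    by (simp_all add: mult.commute)
  then have "int p * int p dvd poly B 1 * poly C 1"
    by (rule mult_dvd_mono)
  also have "poly B 1 * poly C 1 = int p"
    using arg_cong[OF fac, of "\<lambda>P. poly P 1"] by (simp add: geom_poly_def poly_sum poly_monom)
  finally show False
    using p_gt_1 by (simp add: zdvd_imp_le)
qed

lemma geom_poly_root_zeta_power:
  assumes "\<not> p dvd t"
  shows "poly (map_poly of_int (geom_poly p)) (zeta p ^ t) = 0"
proof -
  have "zeta p ^ t \<noteq> 1"
    using assms zeta_power_eq_iff[of p t 0] by (simp add: cong_0_iff)
  moreover have "(zeta p ^ t) ^ p = 1"
    using zeta_power_eq_iff[of p "t * p" 0] by (simp add: power_mult[symmetric] cong_0_iff)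
  ultimately show ?thesis
    by (simp add: poly_geom_poly geometric_sum)
qed

lemma int_poly_root_zeta_power:
  assumes "poly (map_poly of_int A) (zeta p) = 0" and "\<not> p dvd t"
  shows "poly (map_poly of_int A) (zeta p ^ t) = 0"
proof -
  have "poly (map_poly of_int (geom_poly p)) (zeta p) = 0"
    using geom_poly_root_zeta_power[of 1] p_gt_1 by simp
  with assms(1) have "geom_poly p dvd A"
    by (intro monic_irreducible_int_poly_dvd lead_coeff_geom_poly geom_poly_irreducible) simp_all
  then show ?thesis
    using geom_poly_root_zeta_power[OF assms(2)] by (auto simp: map_poly_of_int_mult)
qed

text \<open>
  Reduced modulo \<open>\<Phi>_p\<close>, the polynomial \<open>R\<close> has degree below \<open>p - 1\<close> and takes the value
  \<open>c\<close> at the \<open>p - 1\<close> primitive \<open>p\<close>-th roots of unity, so it is the constant \<open>c\<close>.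
\<close>

lemma Ints_if_const_on_zeta_powers:
  assumes const: "\<And>t. 0 < t \<Longrightarrow> t < p \<Longrightarrow> poly (map_poly of_int R) (zeta p ^ t) = c"
  shows "c \<in> \<int>"
proof -
  obtain Q R' where div: "R = geom_poly p * Q + R'"
    and R': "R' = 0 \<or> degree R' < degree (geom_poly p)"
    using monic_int_poly_divmod[OF lead_coeff_geom_poly[OF p_pos]] .
  have "poly (map_poly of_int R') (zeta p ^ t) = c" if "t \<in> {0<..<p}" for t
  proof -
    have "\<not> p dvd t"
      using that by (auto dest: dvd_imp_le)
    moreover have "R' = R - geom_poly p * Q"
      using div by simp
    ultimately show ?thesis
      using that const geom_poly_root_zeta_power
      by (simp add: map_poly_of_int_diff map_poly_of_int_mult)
  qed
  then have "\<forall>x \<in> (\<lambda>t. zeta p ^ t) ` {0<..<p}. poly (map_poly of_int R') x = c"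
    by blast
  moreover have "card ((\<lambda>t. zeta p ^ t) ` {0<..<p}) = p - 1"
    by (subst card_image) (auto simp: inj_on_def zeta_power_eq_iff cong_def)
  moreover have "degree (map_poly of_int R' :: complex poly) < p - 1"
    using R' degree_geom_poly[OF p_pos] p_gt_1 by auto
  ultimately have "map_poly of_int R' = [:c:]"
    by (intro poly_eq_const_if_card_gt_degree[of "(\<lambda>t. zeta p ^ t) ` {0<..<p}"]) auto
  then have "c = of_int (coeff R' 0)"
    by (metis coeff_map_poly coeff_pCons_0 of_int_0)
  then show ?thesis
    by simp
qed

section \<open>Integrality of \<open>m_f\<close>\<close>

definition S_support :: "'a poly \<Rightarrow> 'a set" where
  "S_support f = {m. m \<noteq> 0 \<and> S p k f m \<noteq> 0}"

lemma Omega_eq_image: "Omega p k (f :: 'a poly) = S p k f ` S_support f"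
  by (auto simp: Omega_def S_support_def)

lemma finite_Omega [simp]: "finite (Omega p k (f :: 'a poly))"
  by (simp add: Omega_eq_image)

text \<open>
  \<open>S_{f,m}\<close> is the value of \<open>char_sum_poly f m\<close> at \<open>zeta_p\<close>; evaluating at \<open>zeta_p^t\<close>
  instead gives \<open>S_{f,tm}\<close>, which is how the Galois action on \<open>\<rat>(zeta_p)\<close> appears here.
\<close>

definition char_sum_poly :: "'a poly \<Rightarrow> 'a \<Rightarrow> int poly" where
  "char_sum_poly f m = (\<Sum>x\<in>UNIV. monom 1 (tr_nat p k (m * poly f x)))"

lemma poly_char_sum_poly:
  "poly (map_poly of_int (char_sum_poly f m)) (zeta p ^ t) = S p k f (of_nat t * m)"
  by (simp add: char_sum_poly_def S_def map_poly_of_int_sum map_poly_monom poly_sum poly_monom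
      psi_of_nat_mult power_mult mult.assoc)

lemma poly_char_sum_poly_zeta: "poly (map_poly of_int (char_sum_poly f m)) (zeta p) = S p k f m"
  using poly_char_sum_poly[of f m 1] by simp

lemma of_nat_inverse_mod_p:
  assumes "\<not> p dvd t"
  obtains t' where "\<not> p dvd t'" and "(of_nat t' :: 'a) * of_nat t = 1"
proof -
  have "(of_nat t :: 'a) \<noteq> 0"
    using assms by (simp add: of_nat_eq_0_iff_char_dvd CHAR_eq)
  have "inverse (of_nat t :: 'a) ^ p = inverse (of_nat t)"
    by (simp add: power_inverse of_nat_power_p)
  then obtain t' where "t' < p" and t': "(of_nat t' :: 'a) = inverse (of_nat t)"
    by (rule power_p_fixed_imp_of_nat)
  then have "(of_nat t' :: 'a) \<noteq> 0"
    using \<open>(of_nat t :: 'a) \<noteq> 0\<close> by simp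
  then have "\<not> p dvd t'"
    by (simp add: of_nat_eq_0_iff_char_dvd CHAR_eq)
  with t' \<open>(of_nat t :: 'a) \<noteq> 0\<close> show ?thesis
    by (intro that) (simp_all add: field_simps)
qed

lemma S_of_nat_mult_eq:
  fixes f :: "'a poly"
  assumes "\<not> p dvd t" and "S p k f m = S p k f m'"
  shows "S p k f (of_nat t * m) = S p k f (of_nat t * m')"
proof -
  let ?D = "char_sum_poly f m - char_sum_poly f m'"
  have "poly (map_poly of_int ?D) (zeta p) = 0"
    using assms(2) by (simp add: map_poly_of_int_diff poly_char_sum_poly_zeta)
  then have "poly (map_poly of_int ?D) (zeta p ^ t) = 0"
    by (rule int_poly_root_zeta_power[OF _ assms(1)])
  then show ?thesis
    by (simp add: map_poly_of_int_diff poly_char_sum_poly)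
qed

lemma S_of_nat_mult_eq_0:
  fixes f :: "'a poly"
  assumes "\<not> p dvd t" and "S p k f m = 0"
  shows "S p k f (of_nat t * m) = 0"
proof -
  have "poly (map_poly of_int (char_sum_poly f m)) (zeta p ^ t) = 0"
    using assms by (intro int_poly_root_zeta_power) (simp_all add: poly_char_sum_poly_zeta)
  then show ?thesis
    by (simp add: poly_char_sum_poly)
qed

lemma S_support_of_nat_mult:
  fixes f :: "'a poly"
  assumes t: "\<not> p dvd t" and m: "m \<in> S_support f"
  shows "of_nat t * m \<in> S_support f"
proof -
  obtain t' where t': "\<not> p dvd t'" "(of_nat t' :: 'a) * of_nat t = 1"
    using of_nat_inverse_mod_p[OF t] .
  have "S p k f (of_nat t' * (of_nat t * m)) \<noteq> 0"
    using m t'(2) by (simp add: S_support_def mult.assoc[symmetric])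
  then have "S p k f (of_nat t * m) \<noteq> 0"
    using S_of_nat_mult_eq_0[OF t'(1)] by blast
  moreover have "of_nat t \<noteq> (0 :: 'a)"
    using t'(2) by auto
  ultimately show ?thesis
    using m by (simp add: S_support_def)
qed

lemma conj_permutes_Omega:
  fixes f :: "'a poly"
  assumes t: "\<not> p dvd t"
    and rep: "\<And>v. v \<in> Omega p k f \<Longrightarrow> rep v \<in> S_support f \<and> S p k f (rep v) = v"
  shows "(\<lambda>v. S p k f (of_nat t * rep v)) ` Omega p k f = Omega p k f"
proof
  show "(\<lambda>v. S p k f (of_nat t * rep v)) ` Omega p k f \<subseteq> Omega p k f"
  proof (rule image_subsetI)
    fix v assume "v \<in> Omega p k f"
    then have "of_nat t * rep v \<in> S_support f"
      using rep S_support_of_nat_mult[OF t] by blast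
    then show "S p k f (of_nat t * rep v) \<in> Omega p k f"
      unfolding Omega_eq_image by (rule imageI)
  qed
  show "Omega p k f \<subseteq> (\<lambda>v. S p k f (of_nat t * rep v)) ` Omega p k f"
  proof
    fix \<mu> assume "\<mu> \<in> Omega p k f"
    then obtain m where m: "m \<in> S_support f" "S p k f m = \<mu>"
      unfolding Omega_eq_image by blast
    obtain t' where t': "\<not> p dvd t'" "(of_nat t' :: 'a) * of_nat t = 1"
      using of_nat_inverse_mod_p[OF t] .
    define v where "v = S p k f (of_nat t' * m)"
    have "v \<in> Omega p k f"
      using S_support_of_nat_mult[OF t'(1) m(1)] by (simp add: v_def Omega_eq_image)
    then have "S p k f (rep v) = S p k f (of_nat t' * m)"
      using rep by (simp add: v_def)
    then have "S p k f (of_nat t * rep v) = S p k f (of_nat t * (of_nat t' * m))"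
      by (rule S_of_nat_mult_eq[OF t])
    also have "\<dots> = \<mu>"
      using t'(2) m(2) by (simp add: mult.assoc[symmetric] mult.commute[of "of_nat t :: 'a"])
    finally show "\<mu> \<in> (\<lambda>v. S p k f (of_nat t * rep v)) ` Omega p k f"
      using \<open>v \<in> Omega p k f\<close> by (rule image_eqI[OF sym])
  qed
qed

lemma mpoly_eq_conj:
  fixes f :: "'a poly"
  assumes t: "\<not> p dvd t"
    and rep: "\<And>v. v \<in> Omega p k f \<Longrightarrow> rep v \<in> S_support f \<and> S p k f (rep v) = v"
  shows "mpoly p k f
    = (\<Prod>v\<in>Omega p k f. [:- poly (map_poly of_int (char_sum_poly f (rep v))) (zeta p ^ t), 1:])"
proof -
  let ?\<sigma> = "\<lambda>v. S p k f (of_nat t * rep v)"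
  have image: "?\<sigma> ` Omega p k f = Omega p k f"
    by (rule conj_permutes_Omega[OF t rep])
  then have "inj_on ?\<sigma> (Omega p k f)"
    by (intro finite_surj_inj) simp_all
  then have "mpoly p k f = (\<Prod>v\<in>Omega p k f. [:- ?\<sigma> v, 1:])"
    unfolding mpoly_def by (subst image[symmetric]) (simp add: prod.reindex)
  then show ?thesis
    by (simp add: poly_char_sum_poly)
qed

lemma coeff_mpoly_Ints: "coeff (mpoly p k (f :: 'a poly)) i \<in> \<int>"
proof -
  have "\<forall>v\<in>Omega p k f. \<exists>m. m \<in> S_support f \<and> S p k f m = v"
    by (auto simp: Omega_eq_image)
  then obtain rep where "\<forall>v\<in>Omega p k f. rep v \<in> S_support f \<and> S p k f (rep v) = v"
    by (rule bchoice[THEN exE])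
  then have rep: "\<And>v. v \<in> Omega p k f \<Longrightarrow> rep v \<in> S_support f \<and> S p k f (rep v) = v"
    by blast
  let ?P = "\<lambda>v. char_sum_poly f (rep v)"
  show ?thesis
  proof (rule Ints_if_const_on_zeta_powers)
    fix t assume "0 < t" "t < p"
    then have "\<not> p dvd t"
      by (auto dest: dvd_imp_le)
    then show "poly (map_poly of_int (coeff (\<Prod>v\<in>Omega p k f. [:- ?P v, 1:]) i)) (zeta p ^ t)
        = coeff (mpoly p k f) i"
      by (simp add: mpoly_eq_conj[OF _ rep] coeff_prod_linear_eval)
  qed
qed

section \<open>Character sums for \<open>N_s\<close> and \<open>u_s\<close>\<close>

lemma sum_PiE_prod_psi:
  "(\<Sum>x\<in>{0..<s} \<rightarrow>\<^sub>E (UNIV :: 'a set). \<Prod>i<s. psi p k (m * poly f (x i))) = S p k f m ^ s"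
  using prod_sum_PiE[of "{0..<s}" "\<lambda>_. UNIV :: 'a set" "\<lambda>_ y. psi p k (m * poly f y)"]
  by (simp add: S_def atLeast0LessThan)

lemma N_eq_char_sum:
  fixes f :: "'a poly"
  shows "of_nat (card (UNIV :: 'a set)) * of_nat (N s f a)
    = (\<Sum>m\<in>UNIV. psi p k (- m * a) * S p k f m ^ s)"
proof -
  define X where "X = {0..<s} \<rightarrow>\<^sub>E (UNIV :: 'a set)"
  have "(of_nat (N s f a) :: complex) = (\<Sum>x\<in>X. if (\<Sum>i<s. poly f (x i)) = a then 1 else 0)"
    by (simp add: N_def X_def sum.If_cases finite_PiE Int_def)
  then have "of_nat (card (UNIV :: 'a set)) * of_nat (N s f a)
      = (\<Sum>x\<in>X. \<Sum>m\<in>UNIV. psi p k (m * ((\<Sum>i<s. poly f (x i)) - a)))"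
    by (simp add: sum_distrib_left psi_orthogonality if_distrib cong: if_cong)
  also have "\<dots> = (\<Sum>x\<in>X. \<Sum>m\<in>UNIV. psi p k (- m * a) * (\<Prod>i<s. psi p k (m * poly f (x i))))"
  proof (intro sum.cong refl)
    fix x m
    have "m * ((\<Sum>i<s. poly f (x i)) - a) = - m * a + (\<Sum>i<s. m * poly f (x i))"
      by (simp add: algebra_simps sum_distrib_left)
    then show "psi p k (m * ((\<Sum>i<s. poly f (x i)) - a))
        = psi p k (- m * a) * (\<Prod>i<s. psi p k (m * poly f (x i)))"
      by (simp only: psi_add psi_sum)
  qed
  also have "\<dots> = (\<Sum>m\<in>UNIV. psi p k (- m * a) * S p k f m ^ s)"
    by (subst sum.swap) (simp add: X_def sum_PiE_prod_psi flip: sum_distrib_left)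
  finally show ?thesis .
qed

lemma u_eq_char_sum:
  fixes f :: "'a poly"
  assumes "s \<ge> 1"
  shows "(of_int (u s f a) :: complex)
    = (\<Sum>m\<in>S_support f. psi p k (- m * a) * S p k f m ^ s) / of_nat (card (UNIV :: 'a set))"
proof -
  let ?q = "card (UNIV :: 'a set)" and ?t = "\<lambda>m. psi p k (- m * a) * S p k f m ^ s"
  have "(\<Sum>m\<in>UNIV. ?t m) = ?t 0 + (\<Sum>m\<in>UNIV - {0}. ?t m)"
    by (rule sum.remove) simp_all
  also have "(\<Sum>m\<in>UNIV - {0}. ?t m) = (\<Sum>m\<in>S_support f. ?t m)"
    using assms by (intro sum.mono_neutral_right) (auto simp: S_support_def)
  also have "?t 0 = of_nat ?q * of_nat ?q ^ (s - 1)"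
    using assms by (simp add: S_def power_eq_if)
  finally have "of_nat ?q * of_nat (N s f a)
      = of_nat ?q * of_nat ?q ^ (s - 1) + (\<Sum>m\<in>S_support f. ?t m)"
    by (simp add: N_eq_char_sum)
  then show ?thesis
    by (simp add: u_def field_simps)
qed

lemma recurrence_sum_eq:
  fixes f :: "'a poly" and g :: "int poly"
  shows "(of_int (\<Sum>i\<le>degree g. coeff g i * u (j + i + 1) f a) :: complex)
    = (\<Sum>m\<in>S_support f. psi p k (- m * a) * S p k f m ^ (j + 1) * poly (map_poly of_int g) (S p k f m))
      / of_nat (card (UNIV :: 'a set))"
  by (simp add: u_eq_char_sum poly_altdef coeff_map_poly sum_divide_distrib sum_distrib_left
      sum_distrib_right power_add mult_ac sum.swap[of _ "S_support f"])

lemma gen_poly_u: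
  fixes f :: "'a poly"
  assumes G: "map_poly of_int G = mpoly p k f"
  shows "gen_poly G (\<lambda>s. u s f a)"
  unfolding gen_poly_def
proof (intro conjI allI)
  show "G \<noteq> 0"
    using G by (auto simp: mpoly_def)
  fix j
  have "poly (map_poly of_int G) (S p k f m) = 0" if "m \<in> S_support f" for m
    using that by (auto simp: G mpoly_def poly_prod Omega_eq_image)
  then have "(of_int (\<Sum>i\<le>degree G. coeff G i * u (j + i + 1) f a) :: complex) = 0"
    unfolding recurrence_sum_eq by simp
  then show "(\<Sum>i\<le>degree G. coeff G i * u (j + i + 1) f a) = 0"
    by (simp only: of_int_eq_0_iff)
qed

lemma gen_poly_u_vanishes_on_Omega:
  fixes f :: "'a poly"
  assumes g: "gen_poly g (\<lambda>s. u s f 0)" and v: "v \<in> Omega p k f"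
  shows "poly (map_poly of_int g) v = (0 :: complex)"
proof -
  let ?c = "\<lambda>m. poly (map_poly of_int g) (S p k f m) :: complex"
  have "(\<Sum>m\<in>S_support f. ?c m * S p k f m ^ Suc j) = 0" for j
    using g recurrence_sum_eq[of g j f 0] by (simp add: gen_poly_def mult_ac)
  moreover have "v \<noteq> 0"
    using v by (auto simp: Omega_def)
  ultimately have "(\<Sum>m | m \<in> S_support f \<and> S p k f m = v. ?c m) = 0"
    by (intro power_sums_vanish_imp_fiber_sum_eq_0) simp_all
  also have "(\<Sum>m | m \<in> S_support f \<and> S p k f m = v. ?c m)
      = of_nat (card {m \<in> S_support f. S p k f m = v}) * poly (map_poly of_int g) v"
    by simp
  finally show ?thesis
    using v by (auto simp: Omega_eq_image)
qed

lemma min_poly_seq_u: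
  fixes f :: "'a poly"
  assumes G: "map_poly of_int G = mpoly p k f"
  shows "min_poly_seq G (\<lambda>s. u s f 0)"
  unfolding min_poly_seq_def
proof (intro conjI allI impI)
  show "gen_poly G (\<lambda>s. u s f 0)"
    by (rule gen_poly_u[OF G])
  have "(of_int (lead_coeff G) :: complex) = lead_coeff (mpoly p k f)"
    by (simp flip: G add: coeff_map_poly)
  also have "\<dots> = 1"
    by (simp add: mpoly_def lead_coeff_prod)
  finally show "content G = 1"
    by (simp add: content_monic_int_poly)
  fix g assume g: "gen_poly g (\<lambda>s. u s f 0)"
  then have "map_poly of_int g \<noteq> (0 :: complex poly)"
    by (simp add: gen_poly_def)
  have "degree G = card (Omega p k f)"
    using degree_map_poly_of_int[of G, where 'b = complex]
    by (simp add: G mpoly_def degree_prod_eq_sum_degree)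
  also have "\<dots> \<le> card {x. poly (map_poly of_int g) x = (0 :: complex)}"
    using gen_poly_u_vanishes_on_Omega[OF g]
    by (intro card_mono poly_roots_finite[OF \<open>map_poly of_int g \<noteq> 0\<close>]) auto
  also have "\<dots> \<le> degree g"
    using card_poly_roots_bound[OF \<open>map_poly of_int g \<noteq> 0\<close>] by simp
  finally show "degree G \<le> degree g" .
qed

section \<open>The generating function\<close>

lemma Mf_eq: "Mf p k (f :: 'a poly) = (\<Prod>m\<in>S_support f. [:- 1 / S p k f m, 1:])"
  by (simp add: Mf_def S_support_def)

lemma Mt_eq:
  "Mt p k (f :: 'a poly) a = (\<Sum>n\<in>S_support f. smult (psi p k (- n * a))
      (\<Prod>m\<in>S_support f - {n}. [:- 1 / S p k f m, 1:]))"
proof -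
  have "{m. m \<noteq> 0 \<and> m \<noteq> n \<and> S p k f m \<noteq> 0} = S_support f - {n}" for n
    by (auto simp: S_support_def)
  then show ?thesis
    by (simp add: Mt_def S_support_def)
qed

lemma Mt_zero_eq_pderiv_Mf: "Mt p k (f :: 'a poly) 0 = pderiv (Mf p k f)"
  by (simp add: Mt_eq Mf_eq pderiv_prod pderiv_pCons)

lemma fps_Mt_div_Mf:
  fixes f :: "'a poly"
  shows "fps_X * fps_of_poly (Mt p k f a) / (of_nat (card (UNIV :: 'a set)) * fps_of_poly (Mf p k f))
    = Abs_fps (\<lambda>j. if j = 0 then 0 else - of_int (u j f a))"
proof -
  let ?q = "of_nat (card (UNIV :: 'a set)) :: complex"
  let ?D = "fps_of_poly (Mf p k f)"
  have "?D $ 0 \<noteq> 0"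
    by (simp add: Mf_eq poly_0_coeff_0[symmetric] poly_prod S_support_def)
  then have "fps_X * fps_of_poly (Mt p k f a) / (fps_const ?q * ?D)
      = fps_const (1 / ?q) * (fps_X * fps_of_poly (Mt p k f a) / ?D)"
    by (simp add: fps_divide_unit fps_inverse_mult fps_const_inverse inverse_eq_divide mult_ac)
  also have "fps_X * fps_of_poly (Mt p k f a) / ?D
      = Abs_fps (\<lambda>j. if j = 0 then 0 else - (\<Sum>n\<in>S_support f. psi p k (- n * a) * S p k f n ^ j))"
    unfolding Mt_eq Mf_eq by (rule fps_X_partial_fractions) (auto simp: S_support_def)
  finally show ?thesis
    by (intro fps_ext) (simp add: u_eq_char_sum fps_of_nat[symmetric])
qed

end

theorem theorem1p1:
  fixes f :: "'a::{field,finite} poly" and a :: 'a and p k :: nat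
  assumes "prime p" and "k \<ge> 1" and "card (UNIV::'a set) = p ^ k" and "CHAR('a) = p"
  shows "(\<forall>i. coeff (mpoly p k f) i \<in> \<int>)
       \<and> (\<exists>g :: int poly. map_poly of_int g = mpoly p k f
            \<and> lin_rec_seq (\<lambda>s. u s f a)
            \<and> gen_poly g (\<lambda>s. u s f a)
            \<and> min_poly_seq g (\<lambda>s. u s f 0))
       \<and> Abs_fps (\<lambda>s. if s = 0 then 0 else of_nat (N s f a)) =
           fps_X / (1 - of_nat (card (UNIV::'a set)) * fps_X)
           - fps_X * fps_of_poly (Mt p k f a)
               / (of_nat (card (UNIV::'a set)) * fps_of_poly (Mf p k f))
       \<and> Mt p k f 0 = pderiv (Mf p k f)"
proof -
  interpret prime_power_field p k "TYPE('a)"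
    using assms by unfold_locales
  let ?q = "card (UNIV :: 'a set)"
  have integral: "\<forall>i. coeff (mpoly p k f) i \<in> \<int>"
    using coeff_mpoly_Ints by blast
  then obtain G where G: "map_poly of_int G = mpoly p k f"
    using intpolyE[of "mpoly p k f"] by metis
  have rec: "gen_poly G (\<lambda>s. u s f a)"
    by (rule gen_poly_u[OF G])
  have "fps_X / (1 - of_nat ?q * fps_X)
      = Abs_fps (\<lambda>n. if n = 0 then 0 else (of_nat ?q :: complex) ^ (n - 1))"
    using fps_X_div_one_minus_const_X[of "of_nat ?q"] by (simp flip: fps_of_nat)
  then have gf: "Abs_fps (\<lambda>s. if s = 0 then 0 else of_nat (N s f a))
      = fps_X / (1 - of_nat ?q * fps_X)
        - fps_X * fps_of_poly (Mt p k f a) / (of_nat ?q * fps_of_poly (Mf p k f))"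
    by (simp add: fps_Mt_div_Mf) (intro fps_ext, simp add: u_def)
  show ?thesis
    using integral G rec min_poly_seq_u[OF G] gf Mt_zero_eq_pderiv_Mf
    by (auto simp: lin_rec_seq_def)
qed

end
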